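(* For every integer $n\ge 0$, \[ \sum_{j=0}^{n} \frac{q^{j}(q;q)_{n+j}}{(q^2;q^2)_j}=(q^2;q^2)_n . \]
   Context: $(a;q)_0:=1$ and $(a;q)_n:=(1-a)(1-aq)\cdots(1-aq^{n-1})$ for $n\ge1$. *)

theory Defs
  imports Complex_Main
begin

definition qpoch :: "'a::comm_ring_1 \<Rightarrow> 'a \<Rightarrow> nat \<Rightarrow> 'a" where
  "qpoch a q n = (\<Prod>k<n. 1 - a * q ^ k)"

end

theory Submission
  imports Defs
begin

text \<open>Multiplying by (q^2;q^2)_n turns the identity into the polynomial identity
  S_n = (q^2;q^2)_n^2, where S_n = sum_{j<=n} q^j (q;q)_{n+j} (q^{2j+2};q^2)_{n-j}.
  This is proved by induction on n: splitting off the new factors 1 - q^{n+j+1} and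
  1 - q^{2n+2}, the terms of S_{n+1} become (1 - q^{2n+2})^2 times those of S_n plus a sum
  that telescopes and cancels the new top term j = n + 1.\<close>

lemma qpoch_0 [simp]: "qpoch a q 0 = 1"
  by (simp add: qpoch_def)

lemma qpoch_Suc: "qpoch a q (Suc n) = qpoch a q n * (1 - a * q ^ n)"
  by (simp add: qpoch_def)

lemma qpoch_add: "qpoch a q (m + k) = qpoch a q m * qpoch (a * q ^ m) q k"
  by (induction k) (simp_all add: qpoch_Suc power_add mult.assoc)

lemma qpoch_Suc_left: "qpoch a q (Suc k) = (1 - a) * qpoch (a * q) q k"
  using qpoch_add[of a q 1 k] by (simp add: qpoch_def)

lemma qpoch_square_split:
  fixes q :: "'a::comm_ring_1"
  assumes "j \<le> n"
  shows "qpoch (q^2) (q^2) n = qpoch (q^2) (q^2) j * qpoch ((q^2) ^ Suc j) (q^2) (n - j)"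
  using qpoch_add[of "q^2" "q^2" j "n - j"] assms by (simp add: mult.commute)

lemma qpoch_tail_Suc:
  fixes q :: "'a::comm_ring_1"
  assumes "j \<le> n"
  shows "qpoch ((q^2) ^ Suc j) (q^2) (Suc n - j)
    = qpoch ((q^2) ^ Suc j) (q^2) (n - j) * (1 - (q^2) ^ Suc n)"
proof -
  have "(q^2) ^ j * (q^2) ^ (n - j) = (q^2) ^ n"
    using assms by (simp flip: power_add)
  then have "(q^2) ^ Suc j * (q^2) ^ (n - j) = (q^2) ^ Suc n"
    by (simp add: mult.assoc)
  then show ?thesis
    using assms by (simp add: Suc_diff_le qpoch_Suc)
qed

lemma qpoch_tail_step:
  fixes q :: "'a::comm_ring_1"
  assumes "m < n"
  shows "qpoch ((q^2) ^ Suc m) (q^2) (n - m)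
    = (1 - (q^2) ^ Suc m) * qpoch ((q^2) ^ Suc (Suc m)) (q^2) (n - Suc m)"
proof -
  have "n - m = Suc (n - Suc m)" using assms by simp
  then show ?thesis by (simp add: qpoch_Suc_left mult.commute)
qed

text \<open>The j-th summand is f (j - 1) - f j for f j = (q;q)_{n+j+1} (q^{2j+2};q^2)_{n-j},
  and the summand for j = 0 is - f 0.\<close>

lemma qpoch_telescoping_sum:
  fixes q :: "'a::comm_ring_1"
  assumes "m \<le> n"
  shows "(\<Sum>j=0..m. (qpoch q q (n + j) * (1 - (q^2) ^ j)
            - qpoch q q (Suc (n + j))) * qpoch ((q^2) ^ Suc j) (q^2) (n - j))
    = - qpoch q q (Suc (n + m)) * qpoch ((q^2) ^ Suc m) (q^2) (n - m)"
  using assms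
proof (induction m)
  case 0
  then show ?case by simp
next
  case (Suc m)
  then show ?case
    by (simp add: qpoch_tail_step[of m n q] algebra_simps del: power_Suc)
qed

lemma qpoch_summand_step:
  fixes q :: "'a::comm_ring_1"
  shows "q ^ j * qpoch q q (Suc (n + j))
    = q ^ j * qpoch q q (n + j) * (1 - (q^2) ^ Suc n)
      + q ^ Suc n * (qpoch q q (n + j) * (1 - (q^2) ^ j) - qpoch q q (Suc (n + j)))"
  by (simp add: qpoch_Suc power_add power2_eq_square power_mult_distrib algebra_simps)

lemma qpoch_sum_eq_square:
  fixes q :: "'a::comm_ring_1"
  shows "(\<Sum>j=0..n. q ^ j * qpoch q q (n + j) * qpoch ((q^2) ^ Suc j) (q^2) (n - j))
    = qpoch (q^2) (q^2) n ^ 2"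
proof (induction n)
  case 0
  then show ?case by simp
next
  case (Suc n)
  define c where "c = 1 - (q^2) ^ Suc n"
  define E where "E j = qpoch ((q^2) ^ Suc j) (q^2) (n - j)" for j
  have summand: "q ^ j * qpoch q q (Suc n + j) * qpoch ((q^2) ^ Suc j) (q^2) (Suc n - j)
      = c^2 * (q ^ j * qpoch q q (n + j) * E j)
        + c * q ^ Suc n * ((qpoch q q (n + j) * (1 - (q^2) ^ j) - qpoch q q (Suc (n + j))) * E j)"
    if "j \<in> {0..n}" for j
  proof -
    have tail: "qpoch ((q^2) ^ Suc j) (q^2) (Suc n - j) = E j * c"
      using that qpoch_tail_Suc[of j n q] by (simp add: E_def c_def)
    have head: "q ^ j * qpoch q q (Suc n + j)
        = q ^ j * qpoch q q (n + j) * c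
          + q ^ Suc n * (qpoch q q (n + j) * (1 - (q^2) ^ j) - qpoch q q (Suc (n + j)))"
      using qpoch_summand_step[of q j n] by (simp add: c_def)
    show ?thesis
      unfolding tail head by (simp add: power2_eq_square algebra_simps)
  qed
  have top: "qpoch q q (Suc n + Suc n) = qpoch q q (Suc (n + n)) * c"
    by (simp add: qpoch_Suc c_def power2_eq_square power_mult_distrib power_add algebra_simps)
  have "(\<Sum>j=0..Suc n. q ^ j * qpoch q q (Suc n + j) * qpoch ((q^2) ^ Suc j) (q^2) (Suc n - j))
      = (\<Sum>j=0..n. q ^ j * qpoch q q (Suc n + j) * qpoch ((q^2) ^ Suc j) (q^2) (Suc n - j))
        + q ^ Suc n * qpoch q q (Suc n + Suc n)"
    by simp
  also have "\<dots> = c^2 * (\<Sum>j=0..n. q ^ j * qpoch q q (n + j) * E j)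
      + c * q ^ Suc n * (\<Sum>j=0..n. (qpoch q q (n + j) * (1 - (q^2) ^ j)
            - qpoch q q (Suc (n + j))) * E j)
      + q ^ Suc n * qpoch q q (Suc n + Suc n)"
    by (simp only: sum.cong[OF refl summand] sum.distrib sum_distrib_left)
  also have "\<dots> = c^2 * qpoch (q^2) (q^2) n ^ 2"
    using Suc.IH qpoch_telescoping_sum[of n n q] top by (simp add: E_def)
  also have "\<dots> = qpoch (q^2) (q^2) (Suc n) ^ 2"
    by (simp add: qpoch_Suc c_def power_mult_distrib)
  finally show ?case .
qed

theorem lemma3p3:
  fixes q :: "'a::field" and n :: nat
  assumes "\<And>j. j \<le> n \<Longrightarrow> qpoch (q^2) (q^2) j \<noteq> 0"
  shows "(\<Sum>j=0..n. q ^ j * qpoch q q (n + j) / qpoch (q^2) (q^2) j) = qpoch (q^2) (q^2) n"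
proof -
  let ?D = "qpoch (q^2) (q^2)"
  have "(\<Sum>j=0..n. q ^ j * qpoch q q (n + j) / ?D j) * ?D n
      = (\<Sum>j=0..n. q ^ j * qpoch q q (n + j) * qpoch ((q^2) ^ Suc j) (q^2) (n - j))"
    unfolding sum_distrib_right
    by (rule sum.cong) (use assms qpoch_square_split[of _ n q] in auto)
  also have "\<dots> = ?D n * ?D n"
    using qpoch_sum_eq_square[where q = q and n = n] by (simp add: power2_eq_square)
  finally show ?thesis
    using assms[of n] by simp
qed

end
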